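(* Let $D$ be a principal ideal domain, $n$ a positive integer, $h_1,\ldots,h_n\in D$, and let $A$ be the $n\times n$ lower triangular Toeplitz matrix whose $(i,j)$ entry is $h_{n-i+j}$ for $i\ge j$ and $0$ for $i<j$. For $1\le c\le n$ let $A_c$ be the $(n-c+1)\times c$ submatrix of $A$ formed by columns $1,\ldots,c$ and rows $c,\ldots,n$. Then for $1\le k\le \frac n2$, the $k$-th Smith normal form entry of $A_c$ is the same (up to units) for all $c$ with $k\le c\le \frac n2$.
   Context: For a $p\times q$ matrix $M$ over a PID with $p\ge q$, its Smith normal form entries $d_1\mid d_2\mid\cdots\mid d_q$ are the diagonal entries of $PMQ$ for invertible $P,Q$ making $PMQ$ diagonal with successive divisibility; they are unique up to units, and $d_k$ is the $k$-th entry. *)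

theory Defs
  imports "Jordan_Normal_Form.Matrix"
begin

class pid = idom +
  assumes every_ideal_principal:
    "\<And>I :: 'a set. 0 \<in> I \<Longrightarrow> (\<forall>x\<in>I. \<forall>y\<in>I. x + y \<in> I) \<Longrightarrow> (\<forall>r. \<forall>x\<in>I. r * x \<in> I)
       \<Longrightarrow> \<exists>g. I = {g * r | r. True}"

text \<open>The n x n lower triangular Toeplitz matrix with (i,j) entry h_(n-i+j) for i>=j
  (1-based indices; here 0-based rows/columns i, j < n).\<close>
definition toeplitz_mat :: "nat \<Rightarrow> (nat \<Rightarrow> 'a::zero) \<Rightarrow> 'a mat" where
  "toeplitz_mat n h = mat n n (\<lambda>(i, j). if j \<le> i then h (n - i + j) else 0)"

definition sub_toeplitz :: "nat \<Rightarrow> (nat \<Rightarrow> 'a::zero) \<Rightarrow> nat \<Rightarrow> 'a mat" where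
  "sub_toeplitz n h c = mat (n - c + 1) c (\<lambda>(r, s). toeplitz_mat n h $$ (r + c - 1, s))"

text \<open>d (indexed 0..q-1, so d (k-1) is the k-th entry) is a list of Smith normal form entries
  of the p x q matrix M: there are invertible P, Q with P M Q diagonal with entries
  d 0, ..., d (q-1) and successive divisibility.\<close>
definition is_snf_entries :: "'a::comm_ring_1 mat \<Rightarrow> (nat \<Rightarrow> 'a) \<Rightarrow> bool" where
  "is_snf_entries M d \<longleftrightarrow>
     (\<exists>P Q. P \<in> carrier_mat (dim_row M) (dim_row M) \<and> Q \<in> carrier_mat (dim_col M) (dim_col M) \<and>
        invertible_mat P \<and> invertible_mat Q \<and>
        P * M * Q = mat (dim_row M) (dim_col M) (\<lambda>(i, j). if i = j then d i else 0) \<and>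
        (\<forall>i. i + 1 < dim_col M \<longrightarrow> d i dvd d (i + 1)))"

end

theory Submission
  imports Defs "Jordan_Normal_Form.Determinant"
begin

text \<open>By the Smith normal form, \<open>d\<^sub>1 \<cdots> d\<^sub>k\<close> generates the ideal of \<open>k\<times>k\<close> minors of a matrix, so it
  suffices that for \<open>k \<le> c \<le> n/2\<close> the \<open>k\<times>k\<close> minors of \<open>A\<^sub>c\<close> and of \<open>A\<^sub>k\<close> generate the same ideal.
  These minors are determinants \<open>det (h (s\<^sub>j - r\<^sub>i))\<close> whose row positions spread over \<open>n - c\<close> and
  whose column positions spread over \<open>c - 1\<close>. The identity
  \<open>\<Sum>\<^bsub>|T|=b\<^esub> det (r, s + 1\<^sub>T) = \<Sum>\<^bsub>|U|=b\<^esub> det (r - 1\<^sub>U, s)\<close>, obtained from the Leibniz formula,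
  trades spread of the columns for spread of the rows: if the column positions miss a value
  inside their range, lowering those above it by one writes the determinant through determinants
  with narrower columns and wider rows, or with columns of smaller quadratic potential.
  Since transposition exchanges rows and columns, the total spread \<open>n - 1\<close> can be
  redistributed in both directions.\<close>

definition toeplitz_det :: "(int \<Rightarrow> 'a::comm_ring_1) \<Rightarrow> nat \<Rightarrow> (nat \<Rightarrow> int) \<Rightarrow> (nat \<Rightarrow> int) \<Rightarrow> 'a" where
  "toeplitz_det x k r s = det (mat k k (\<lambda>(i, j). x (s j - r i)))"

lemma toeplitz_det_cong:
  "(\<And>i. i < k \<Longrightarrow> r i = r' i) \<Longrightarrow> (\<And>j. j < k \<Longrightarrow> s j = s' j) \<Longrightarrow>
   toeplitz_det x k r s = toeplitz_det x k r' s'"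
  unfolding toeplitz_det_def by (intro arg_cong[of _ _ det] eq_matI) auto

lemma toeplitz_det_shift: "toeplitz_det x k r s = toeplitz_det x k (\<lambda>i. r i + u) (\<lambda>j. s j + u)"
  unfolding toeplitz_det_def by (intro arg_cong[of _ _ det] eq_matI) auto

lemma toeplitz_det_transpose: "toeplitz_det x k r s = toeplitz_det x k (\<lambda>i. - s i) (\<lambda>j. - r j)"
proof -
  have "toeplitz_det x k r s = det (transpose_mat (mat k k (\<lambda>(i, j). x (s j - r i))))"
    unfolding toeplitz_det_def by (rule det_transpose[symmetric]) auto
  also have "transpose_mat (mat k k (\<lambda>(i, j). x (s j - r i))) = mat k k (\<lambda>(i, j). x (- r j - - s i))"
    by (intro eq_matI) auto
  finally show ?thesis unfolding toeplitz_det_def .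
qed

lemma toeplitz_det_leibniz:
  "toeplitz_det x k r s = (\<Sum>p | p permutes {0..<k}. signof p * (\<Prod>i = 0..<k. x (s (p i) - r i)))"
  unfolding toeplitz_det_def
  by (subst det_def'[of _ k]) (auto intro!: sum.cong prod.cong simp: permutes_def)

definition card_subsets :: "nat \<Rightarrow> nat \<Rightarrow> nat set set" where
  "card_subsets k b = {T. T \<subseteq> {..<k} \<and> card T = b}"

lemma finite_card_subsets: "finite (card_subsets k b)"
  unfolding card_subsets_def by (rule finite_subset[of _ "Pow {..<k}"]) auto

lemma card_subsets_image_permutes:
  assumes "p permutes {0..<k}" and "T \<in> card_subsets k b"
  shows "p ` T \<in> card_subsets k b"
proof -
  have "p ` {..<k} = {..<k}" using permutes_image[OF assms(1)] by (simp add: atLeast0LessThan)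
  then show ?thesis
    using assms permutes_inj[OF assms(1)] unfolding card_subsets_def
    by (auto simp: card_image inj_on_subset)
qed

text \<open>Reindexing the inner sum by \<open>T = p ` U\<close> turns the column shifts by \<open>1\<^sub>T\<close> into row shifts
  by \<open>1\<^sub>U\<close>, permutation by permutation.\<close>
lemma toeplitz_det_exchange:
  "(\<Sum>T\<in>card_subsets k b. toeplitz_det x k r (\<lambda>j. s j + of_bool (j \<in> T)))
   = (\<Sum>U\<in>card_subsets k b. toeplitz_det x k (\<lambda>i. r i - of_bool (i \<in> U)) s)"
proof -
  have perm: "(\<Sum>T\<in>card_subsets k b. \<Prod>i = 0..<k. x (s (p i) + of_bool (p i \<in> T) - r i))
    = (\<Sum>U\<in>card_subsets k b. \<Prod>i = 0..<k. x (s (p i) - (r i - of_bool (i \<in> U))))"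
    if p: "p permutes {0..<k}" for p
  proof (rule sum.reindex_bij_witness[where i = "\<lambda>U. p ` U" and j = "\<lambda>T. inv_into UNIV p ` T"])
    have bij: "bij p" using p by (rule permutes_bij)
    fix T assume T: "T \<in> card_subsets k b"
    show "p ` inv_into UNIV p ` T = T" by (simp add: image_comp surj_f_inv_f[OF bij_is_surj[OF bij]])
    show "inv_into UNIV p ` T \<in> card_subsets k b"
      by (rule card_subsets_image_permutes[OF permutes_inv[OF p] T])
    show "(\<Prod>i = 0..<k. x (s (p i) - (r i - of_bool (i \<in> inv_into UNIV p ` T)))) =
          (\<Prod>i = 0..<k. x (s (p i) + of_bool (p i \<in> T) - r i))"
      using bij by (intro prod.cong) (auto simp: bij_inv_eq_iff image_iff algebra_simps)
  next
    fix U assume U: "U \<in> card_subsets k b"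
    show "inv_into UNIV p ` p ` U = U" using permutes_inj[OF p] by (simp add: image_comp)
    show "p ` U \<in> card_subsets k b" by (rule card_subsets_image_permutes[OF p U])
  qed
  have "(\<Sum>T\<in>card_subsets k b. toeplitz_det x k r (\<lambda>j. s j + of_bool (j \<in> T)))
    = (\<Sum>p | p permutes {0..<k}. signof p *
         (\<Sum>T\<in>card_subsets k b. \<Prod>i = 0..<k. x (s (p i) + of_bool (p i \<in> T) - r i)))"
    unfolding toeplitz_det_leibniz by (subst sum.swap) (simp add: sum_distrib_left)
  also have "\<dots> = (\<Sum>p | p permutes {0..<k}. signof p *
         (\<Sum>U\<in>card_subsets k b. \<Prod>i = 0..<k. x (s (p i) - (r i - of_bool (i \<in> U)))))"
    by (intro sum.cong refl) (simp add: perm)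
  also have "\<dots> = (\<Sum>U\<in>card_subsets k b. toeplitz_det x k (\<lambda>i. r i - of_bool (i \<in> U)) s)"
    unfolding toeplitz_det_leibniz by (subst sum.swap) (simp add: sum_distrib_left)
  finally show ?thesis .
qed

lemma toeplitz_det_expand:
  assumes J: "J \<in> card_subsets k b"
  shows "toeplitz_det x k r (\<lambda>j. s j + of_bool (j \<in> J))
    = (\<Sum>U\<in>card_subsets k b. toeplitz_det x k (\<lambda>i. r i - of_bool (i \<in> U)) s)
      - (\<Sum>T\<in>card_subsets k b - {J}. toeplitz_det x k r (\<lambda>j. s j + of_bool (j \<in> T)))"
  using toeplitz_det_exchange[where x = x and k = k and r = r and s = s and b = b]
    sum.remove[OF finite_card_subsets J, of "\<lambda>T. toeplitz_det x k r (\<lambda>j. s j + of_bool (j \<in> T))"]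
  by (simp add: algebra_simps)

definition potential :: "int \<Rightarrow> nat \<Rightarrow> (nat \<Rightarrow> int) \<Rightarrow> int" where
  "potential L k s = (\<Sum>j<k. (s j - L)\<^sup>2)"

lemma potential_nonneg: "0 \<le> potential L k s"
  unfolding potential_def by (intro sum_nonneg) auto

lemma potential_strict_mono:
  assumes "\<And>j. j < k \<Longrightarrow> L \<le> s' j \<and> s' j \<le> s j" and "j0 < k" and "s' j0 < s j0"
  shows "potential L k s' < potential L k s"
  unfolding potential_def
proof (rule sum_strict_mono_ex1)
  show "\<forall>j\<in>{..<k}. (s' j - L)\<^sup>2 \<le> (s j - L)\<^sup>2"
    using assms(1) by (auto intro: power_mono)
  show "\<exists>j\<in>{..<k}. (s' j - L)\<^sup>2 < (s j - L)\<^sup>2"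
    using assms by (auto intro!: bexI[of _ j0] power_strict_mono)
qed simp

text \<open>Each column of \<open>J - T\<close> moves down from a value \<open>> v\<close> and each column of \<open>T - J\<close> moves up from
  a value \<open>< v\<close>; pairing them, every pair lowers the potential by at least \<open>2\<close>.\<close>
lemma potential_transfer_less:
  fixes s :: "nat \<Rightarrow> int"
  assumes J: "J = {j. j < k \<and> v < s j}" and gap: "v \<notin> s ` {..<k}"
    and T: "T \<subseteq> {..<k}" "card T = card J" "T \<noteq> J"
  shows "potential L k (\<lambda>j. s j - of_bool (j \<in> J) + of_bool (j \<in> T)) < potential L k s"
proof -
  let ?s' = "\<lambda>j. s j - of_bool (j \<in> J) + of_bool (j \<in> T)"
  define A where "A = - 1 - 2 * (v - L)"
  define B where "B = 2 * (v - L) - 1"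
  have fin: "finite J" "finite T" using J T(1) finite_subset by auto
  then have card_eq: "card (J - T) = card (T - J)"
    using T(2) by (simp add: card_Diff_subset_Int Int_commute)
  have "card (J - T) \<noteq> 0"
    using fin T(2,3) card_subset_eq[of T J] by auto
  have step: "(?s' j - L)\<^sup>2 - (s j - L)\<^sup>2 \<le> of_bool (j \<in> J - T) * A + of_bool (j \<in> T - J) * B"
    if j: "j < k" for j
  proof -
    consider "j \<in> J - T" | "j \<in> T - J" | "j \<in> J \<longleftrightarrow> j \<in> T" by blast
    then show ?thesis
    proof cases
      case 1
      then have "v + 1 \<le> s j" using J by simp
      with 1 show ?thesis unfolding A_def by (simp add: power2_eq_square algebra_simps)
    next
      case 2
      then have "s j \<le> v - 1" using J gap j by force
      with 2 show ?thesis unfolding B_def by (simp add: power2_eq_square algebra_simps)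
    qed auto
  qed
  have "potential L k ?s' - potential L k s = (\<Sum>j<k. (?s' j - L)\<^sup>2 - (s j - L)\<^sup>2)"
    unfolding potential_def by (simp add: sum_subtractf)
  also have "\<dots> \<le> (\<Sum>j<k. of_bool (j \<in> J - T) * A + of_bool (j \<in> T - J) * B)"
    by (rule sum_mono) (use step in auto)
  also have "\<dots> = int (card (J - T)) * A + int (card (T - J)) * B"
  proof -
    have count: "(\<Sum>j<k. of_bool (j \<in> X) * c) = int (card X) * c" if "X \<subseteq> {..<k}" for X c
      using that by (simp add: Int_absorb1)
    have "J - T \<subseteq> {..<k}" "T - J \<subseteq> {..<k}" using J T(1) by auto
    then show ?thesis by (simp only: sum.distrib count)
  qed
  also have "\<dots> = - 2 * int (card (J - T))"
    unfolding card_eq A_def B_def by (simp add: algebra_simps)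
  also have "\<dots> < 0" using \<open>card (J - T) \<noteq> 0\<close> by simp
  finally show ?thesis by simp
qed

definition values_between :: "nat \<Rightarrow> (nat \<Rightarrow> int) \<Rightarrow> int \<Rightarrow> int \<Rightarrow> bool" where
  "values_between k r a b \<longleftrightarrow> (\<forall>i<k. a \<le> r i \<and> r i \<le> b)"

lemma exists_missing_value:
  fixes s :: "nat \<Rightarrow> int"
  assumes "m \<in> s ` {..<k}" "M \<in> s ` {..<k}" "int k \<le> M - m"
  shows "\<exists>v. m < v \<and> v < M \<and> v \<notin> s ` {..<k}"
proof -
  have "card (s ` {..<k}) < card {m..M}"
    using card_image_le[of "{..<k}" s] assms(3) by simp
  then have "\<not> {m..M} \<subseteq> s ` {..<k}"
    using card_mono[of "s ` {..<k}" "{m..M}"] by auto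
  then obtain v where "v \<in> {m..M}" "v \<notin> s ` {..<k}" by blast
  then show ?thesis using assms(1,2) by (intro exI[of _ v]) auto
qed

lemma lower_above_gap:
  fixes s :: "nat \<Rightarrow> int"
  assumes s: "values_between k s m M" and v: "m < v" "v < M" "v \<notin> s ` {..<k}" "M \<in> s ` {..<k}"
    and L: "L \<le> m" and J_def: "J = {j. j < k \<and> v < s j}" and s0_def: "s0 = (\<lambda>j. s j - of_bool (j \<in> J))"
  shows "values_between k s0 m (M - 1) \<and> potential L k s0 < potential L k s"
    and "T \<in> card_subsets k (card J) - {J} \<Longrightarrow>
      values_between k (\<lambda>j. s0 j + of_bool (j \<in> T)) m M \<and>
      potential L k (\<lambda>j. s0 j + of_bool (j \<in> T)) < potential L k s"
proof -
  have s0: "m \<le> s0 j \<and> s0 j + 1 \<le> M \<and> s0 j \<le> s j \<and> (j \<in> J \<longleftrightarrow> s0 j < s j)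
    \<and> (j \<notin> J \<longrightarrow> s0 j + 1 \<le> v)" if j: "j < k" for j
  proof -
    have "s j \<noteq> v" using j v(3) by blast
    then show ?thesis using s j v(1,2) unfolding values_between_def s0_def J_def by auto
  qed
  obtain jM where jM: "jM < k" "s jM = M" using v(4) by auto
  then have "jM \<in> J" using v(2) unfolding J_def by simp
  then have "potential L k s0 < potential L k s"
    using s0 L jM(1) by (intro potential_strict_mono[of k L _ _ jM]) force+
  then show "values_between k s0 m (M - 1) \<and> potential L k s0 < potential L k s"
    using s0 unfolding values_between_def by force
  assume T: "T \<in> card_subsets k (card J) - {J}"
  have "potential L k (\<lambda>j. s0 j + of_bool (j \<in> T)) < potential L k s"
    unfolding s0_def by (rule potential_transfer_less[OF J_def v(3)]) (use T in \<open>auto simp: card_subsets_def\<close>)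
  moreover have "values_between k (\<lambda>j. s0 j + of_bool (j \<in> T)) m M"
    using s0 unfolding values_between_def by (auto simp: of_bool_def) force+
  ultimately show "values_between k (\<lambda>j. s0 j + of_bool (j \<in> T)) m M \<and>
      potential L k (\<lambda>j. s0 j + of_bool (j \<in> T)) < potential L k s" by simp
qed

text \<open>The determinants in question are the \<open>k\<times>k\<close> minors of the \<open>(\<rho>+1)\<times>(w+1)\<close> Toeplitz matrices
  all of whose entries \<open>x (s j - r i)\<close> have indices in \<open>[lo, hi]\<close>.\<close>
definition dvd_toeplitz_dets :: "(int \<Rightarrow> 'a::comm_ring_1) \<Rightarrow> nat \<Rightarrow> int \<Rightarrow> int \<Rightarrow> nat \<Rightarrow> nat \<Rightarrow> 'a \<Rightarrow> bool" where
  "dvd_toeplitz_dets x k lo hi \<rho> w d \<longleftrightarrow>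
     (\<forall>r s a1 a2 b1 b2. values_between k r a1 a2 \<longrightarrow> values_between k s b1 b2 \<longrightarrow>
        a2 - a1 \<le> int \<rho> \<longrightarrow> b2 - b1 \<le> int w \<longrightarrow> lo \<le> b1 - a2 \<longrightarrow> b2 - a1 \<le> hi \<longrightarrow>
        d dvd toeplitz_det x k r s)"

text \<open>If the column values of \<open>s\<close> spread over more than \<open>w\<close>, they miss some value \<open>v\<close> strictly
  inside their range; lowering the columns above \<open>v\<close> by one and applying \<open>toeplitz_det_expand\<close>
  writes the determinant through determinants whose rows spread one more and whose columns
  one less, or whose columns have smaller potential.\<close>
lemma dvd_toeplitz_det_potential_induct:
  fixes x :: "int \<Rightarrow> 'a::comm_ring_1"
  assumes k: "1 \<le> k" "k \<le> w + 1" and H: "dvd_toeplitz_dets x k lo hi \<rho> w d"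
  shows "values_between k r a1 a2 \<Longrightarrow> values_between k s b1 b2 \<Longrightarrow> L \<le> b1 \<Longrightarrow>
    a2 - a1 \<le> int \<rho> \<Longrightarrow> (a2 - a1) + (b2 - b1) \<le> int \<rho> + int w \<Longrightarrow>
    lo \<le> b1 - a2 \<Longrightarrow> b2 - a1 \<le> hi \<Longrightarrow> d dvd toeplitz_det x k r s"
proof (induction "nat (potential L k s)" arbitrary: r s a1 a2 b1 b2 rule: less_induct)
  case less
  define m where "m = Min (s ` {..<k})"
  define M where "M = Max (s ` {..<k})"
  have ne: "s ` {..<k} \<noteq> {}" using k by (auto simp: lessThan_empty_iff)
  have mM: "m \<in> s ` {..<k}" "M \<in> s ` {..<k}" "\<And>j. j < k \<Longrightarrow> m \<le> s j \<and> s j \<le> M"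
    unfolding m_def M_def using ne by auto
  have bounds: "b1 \<le> m" "M \<le> b2" "L \<le> m"
    using mM(1,2) less.prems(2,3) unfolding values_between_def by auto
  have s: "values_between k s m M" using mM(3) unfolding values_between_def by blast
  show ?case
  proof (cases "M - m \<le> int w")
    case True
    show ?thesis
      by (rule H[unfolded dvd_toeplitz_dets_def, rule_format, OF less.prems(1) s])
        (use less.prems(4-7) bounds True in linarith)+
  next
    case False
    then obtain v where v: "m < v" "v < M" "v \<notin> s ` {..<k}"
      using exists_missing_value[OF mM(1,2)] k(2) by fastforce
    define J where "J = {j. j < k \<and> v < s j}"
    define s0 where "s0 = (\<lambda>j. s j - of_bool (j \<in> J))"
    note lower = lower_above_gap[OF s v mM(2) bounds(3) J_def s0_def]
    have r_between: "values_between k (\<lambda>i. r i - of_bool (i \<in> U)) (a1 - 1) a2" for U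
      using less.prems(1) unfolding values_between_def by (auto simp: of_bool_def)
    have "d dvd toeplitz_det x k (\<lambda>i. r i - of_bool (i \<in> U)) s0" for U
    proof (rule less.hyps[OF _ r_between, of s0 m "M - 1"])
      show "nat (potential L k s0) < nat (potential L k s)"
        using lower(1) potential_nonneg[of L k s0] by linarith
    qed (use lower(1) less.prems(4-7) bounds False in linarith)+
    moreover have "d dvd toeplitz_det x k r (\<lambda>j. s0 j + of_bool (j \<in> T))"
      if T: "T \<in> card_subsets k (card J) - {J}" for T
    proof (rule less.hyps[OF _ less.prems(1), of "\<lambda>j. s0 j + of_bool (j \<in> T)" m M])
      show "nat (potential L k (\<lambda>j. s0 j + of_bool (j \<in> T))) < nat (potential L k s)"
        using lower(2)[OF T] potential_nonneg[of L k "\<lambda>j. s0 j + of_bool (j \<in> T)"] by linarith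
    qed (use lower(2)[OF T] less.prems(4-7) bounds in linarith)+
    moreover have J: "J \<in> card_subsets k (card J)" unfolding card_subsets_def J_def by auto
    ultimately have "d dvd toeplitz_det x k r (\<lambda>j. s0 j + of_bool (j \<in> J))"
      unfolding toeplitz_det_expand[OF J] by (intro dvd_diff dvd_sum) auto
    moreover have "s = (\<lambda>j. s0 j + of_bool (j \<in> J))" unfolding s0_def by simp
    ultimately show ?thesis by simp
  qed
qed

lemma dvd_toeplitz_dets_mono:
  assumes H: "dvd_toeplitz_dets x k lo hi \<rho> w d" and k: "1 \<le> k" "k \<le> w + 1"
    and widths: "\<rho>' \<le> \<rho>" "\<rho>' + w' \<le> \<rho> + w"
  shows "dvd_toeplitz_dets x k lo hi \<rho>' w' d"
  unfolding dvd_toeplitz_dets_def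
proof (intro allI impI)
  fix r s a1 a2 b1 b2
  assume r: "values_between k r a1 a2" and s: "values_between k s b1 b2"
    and "a2 - a1 \<le> int \<rho>'" "b2 - b1 \<le> int w'" "lo \<le> b1 - a2" "b2 - a1 \<le> hi"
  then show "d dvd toeplitz_det x k r s"
    using widths by (intro dvd_toeplitz_det_potential_induct[OF k H r s, of b1]) linarith+
qed

lemma dvd_toeplitz_dets_swap:
  assumes "dvd_toeplitz_dets x k lo hi \<rho> w d"
  shows "dvd_toeplitz_dets x k lo hi w \<rho> d"
  unfolding dvd_toeplitz_dets_def
proof (intro allI impI)
  fix r s a1 a2 b1 b2
  assume "values_between k r a1 a2" "values_between k s b1 b2"
    "a2 - a1 \<le> int w" "b2 - b1 \<le> int \<rho>" "lo \<le> b1 - a2" "b2 - a1 \<le> hi"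
  moreover have "values_between k (\<lambda>i. - f i) (- b) (- a)" if "values_between k f a b" for f a b
    using that unfolding values_between_def by auto
  ultimately have "d dvd toeplitz_det x k (\<lambda>i. - s i) (\<lambda>j. - r j)"
    by (intro assms[unfolded dvd_toeplitz_dets_def, rule_format, of _ "- b2" "- b1" _ "- a2" "- a1"])
      simp_all
  then show "d dvd toeplitz_det x k r s" by (simp only: toeplitz_det_transpose[of x k r s])
qed

definition minor :: "'a mat \<Rightarrow> nat \<Rightarrow> (nat \<Rightarrow> nat) \<Rightarrow> (nat \<Rightarrow> nat) \<Rightarrow> 'a::comm_ring_1" where
  "minor M k f g = det (mat k k (\<lambda>(i, j). M $$ (f i, g j)))"

definition dvd_minors :: "'a::comm_ring_1 mat \<Rightarrow> nat \<Rightarrow> 'a \<Rightarrow> bool" where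
  "dvd_minors M k x \<longleftrightarrow>
     (\<forall>f g. (\<forall>i<k. f i < dim_row M) \<longrightarrow> (\<forall>j<k. g j < dim_col M) \<longrightarrow> x dvd minor M k f g)"

text \<open>Negative arguments never occur below: all entries used have indices in \<open>[1, n]\<close>.\<close>
definition int_seq :: "(nat \<Rightarrow> 'a) \<Rightarrow> int \<Rightarrow> 'a" where
  "int_seq h z = h (nat z)"

lemma dim_sub_toeplitz [simp]:
  "dim_row (sub_toeplitz n h c) = n - c + 1" "dim_col (sub_toeplitz n h c) = c"
  unfolding sub_toeplitz_def by auto

lemma minor_sub_toeplitz:
  assumes c: "1 \<le> c" "c \<le> n" and f: "\<forall>i<k. f i < n - c + 1" and g: "\<forall>j<k. g j < c"
  shows "minor (sub_toeplitz n h c) k f g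
    = toeplitz_det (int_seq h) k (\<lambda>i. int (f i) + int c - int n - 1) (\<lambda>j. int (g j))"
  unfolding minor_def toeplitz_det_def
proof (intro arg_cong[of _ _ det] eq_matI)
  fix i j assume "i < dim_row (mat k k (\<lambda>(i, j). int_seq h (int (g j) - (int (f i) + int c - int n - 1))))"
    "j < dim_col (mat k k (\<lambda>(i, j). int_seq h (int (g j) - (int (f i) + int c - int n - 1))))"
  then have ij: "i < k" "j < k" by auto
  then have "f i < n - c + 1" "g j < c" using f g by auto
  then have "sub_toeplitz n h c $$ (f i, g j) = h (n - (f i + c - 1) + g j)"
    using c unfolding sub_toeplitz_def toeplitz_mat_def by simp
  also have "n - (f i + c - 1) + g j = nat (int (g j) - (int (f i) + int c - int n - 1))"
    using \<open>f i < n - c + 1\<close> c by linarith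
  finally have "sub_toeplitz n h c $$ (f i, g j) = int_seq h (int (g j) - (int (f i) + int c - int n - 1))"
    unfolding int_seq_def .
  then show "mat k k (\<lambda>(i, j). sub_toeplitz n h c $$ (f i, g j)) $$ (i, j)
    = mat k k (\<lambda>(i, j). int_seq h (int (g j) - (int (f i) + int c - int n - 1))) $$ (i, j)"
    using ij by simp
qed auto

lemma toeplitz_det_is_minor_sub_toeplitz:
  assumes c: "1 \<le> c" "c \<le> n" and r: "values_between k r a1 a2" and s: "values_between k s b1 b2"
    and widths: "a2 - a1 \<le> int (n - c)" "b2 - b1 \<le> int (c - 1)"
    and band: "1 \<le> b1 - a2" "b2 - a1 \<le> int n"
  obtains f g where "\<forall>i<k. f i < n - c + 1" "\<forall>j<k. g j < c"
    "toeplitz_det (int_seq h) k r s = minor (sub_toeplitz n h c) k f g"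
proof -
  define e where "e = max (b2 - int c + 1) (a2 + 1)"
  define f where "f = (\<lambda>i. nat (r i - e + int n - int c + 1))"
  define g where "g = (\<lambda>j. nat (s j - e))"
  have g: "\<forall>j<k. g j < c \<and> int (g j) = s j - e"
    using s widths(2) band(1) c unfolding g_def e_def values_between_def by auto
  have f: "\<forall>i<k. f i < n - c + 1 \<and> int (f i) = r i - e + int n - int c + 1"
    using r widths(1) band(2) c unfolding f_def e_def values_between_def by auto
  have "toeplitz_det (int_seq h) k r s = toeplitz_det (int_seq h) k (\<lambda>i. r i + - e) (\<lambda>j. s j + - e)"
    by (rule toeplitz_det_shift)
  also have "\<dots> = toeplitz_det (int_seq h) k (\<lambda>i. int (f i) + int c - int n - 1) (\<lambda>j. int (g j))"
    by (rule toeplitz_det_cong) (use f g in auto)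
  also have "\<dots> = minor (sub_toeplitz n h c) k f g"
    using f g by (intro minor_sub_toeplitz[symmetric] c) auto
  finally show ?thesis using f g that by blast
qed

text \<open>The \<open>k\<times>k\<close> minors of \<open>A\<^sub>c\<close> are exactly the Toeplitz determinants with rows in a window of width
  \<open>n - c\<close>, columns in a window of width \<open>c - 1\<close> and entry indices in \<open>[1, n]\<close>.\<close>
lemma dvd_minors_sub_toeplitz_iff:
  assumes c: "1 \<le> c" "c \<le> n"
  shows "dvd_minors (sub_toeplitz n h c) k d \<longleftrightarrow>
    dvd_toeplitz_dets (int_seq h) k 1 (int n) (n - c) (c - 1) d"
proof
  assume minors: "dvd_minors (sub_toeplitz n h c) k d"
  show "dvd_toeplitz_dets (int_seq h) k 1 (int n) (n - c) (c - 1) d"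
    unfolding dvd_toeplitz_dets_def
  proof (intro allI impI)
    fix r s a1 a2 b1 b2
    assume "values_between k r a1 a2" "values_between k s b1 b2" "a2 - a1 \<le> int (n - c)"
      "b2 - b1 \<le> int (c - 1)" "1 \<le> b1 - a2" "b2 - a1 \<le> int n"
    from toeplitz_det_is_minor_sub_toeplitz[OF c this] obtain f g
      where "\<forall>i<k. f i < n - c + 1" "\<forall>j<k. g j < c"
        "toeplitz_det (int_seq h) k r s = minor (sub_toeplitz n h c) k f g" .
    then show "d dvd toeplitz_det (int_seq h) k r s"
      using minors unfolding dvd_minors_def by simp
  qed
next
  assume dets: "dvd_toeplitz_dets (int_seq h) k 1 (int n) (n - c) (c - 1) d"
  show "dvd_minors (sub_toeplitz n h c) k d"
    unfolding dvd_minors_def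
  proof (intro allI impI)
    fix f g assume f: "\<forall>i<k. f i < dim_row (sub_toeplitz n h c)"
      and g: "\<forall>j<k. g j < dim_col (sub_toeplitz n h c)"
    have "values_between k (\<lambda>i. int (f i) + int c - int n - 1) (int c - int n - 1) (- 1)"
      using f c unfolding values_between_def by force
    moreover have "values_between k (\<lambda>j. int (g j)) 0 (int c - 1)"
      using g unfolding values_between_def by force
    ultimately have "d dvd toeplitz_det (int_seq h) k (\<lambda>i. int (f i) + int c - int n - 1) (\<lambda>j. int (g j))"
      by (rule dets[unfolded dvd_toeplitz_dets_def, rule_format]) (use c in auto)
    then show "d dvd minor (sub_toeplitz n h c) k f g"
      using minor_sub_toeplitz[OF c, of k f g h] f g by simp
  qed
qed

text \<open>Both sides are the Toeplitz determinants of total width \<open>n - 1\<close>; transposition exchanges the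
  roles of rows and columns, so the column width can be lowered to \<open>k - 1\<close> from either side.\<close>
lemma dvd_minors_sub_toeplitz_indep:
  assumes k: "1 \<le> k" "k \<le> c" and cn: "2 * c \<le> n"
  shows "dvd_minors (sub_toeplitz n h c) k d \<longleftrightarrow> dvd_minors (sub_toeplitz n h k) k d"
proof -
  let ?D = "\<lambda>\<rho> w. dvd_toeplitz_dets (int_seq h) k 1 (int n) \<rho> w d"
  have "?D (n - c) (c - 1) \<longleftrightarrow> ?D (n - k) (k - 1)"
  proof
    assume "?D (n - c) (c - 1)"
    then have "?D (c - 1) (n - c)" by (rule dvd_toeplitz_dets_swap)
    then have "?D (k - 1) (n - k)" by (rule dvd_toeplitz_dets_mono) (use k cn in auto)
    then show "?D (n - k) (k - 1)" by (rule dvd_toeplitz_dets_swap)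
  next
    assume "?D (n - k) (k - 1)"
    then show "?D (n - c) (c - 1)" by (rule dvd_toeplitz_dets_mono) (use k cn in auto)
  qed
  then show ?thesis using k cn by (simp add: dvd_minors_sub_toeplitz_iff)
qed

text \<open>Each row of a minor of \<open>A * B\<close> is a linear combination of rows of \<open>B\<close>, so by multilinearity
  the minor is a linear combination of minors of \<open>B\<close>.\<close>
lemma dvd_minors_mult_left:
  assumes A: "A \<in> carrier_mat nr n" and B: "B \<in> carrier_mat n nc" and dB: "dvd_minors B k x"
  shows "dvd_minors (A * B) k x"
  unfolding dvd_minors_def
proof (intro allI impI)
  fix f g assume "\<forall>i<k. f i < dim_row (A * B)" and "\<forall>j<k. g j < dim_col (A * B)"
  then have f: "\<forall>i<k. f i < nr" and g: "\<forall>j<k. g j < nc" using A B by auto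
  let ?a = "\<lambda>i l. A $$ (f i, l) \<cdot>\<^sub>v vec k (\<lambda>j. B $$ (l, g j))"
  let ?F = "{\<phi>. (\<forall>i\<in>{0..<k}. \<phi> i \<in> {0..<n}) \<and> (\<forall>i. i \<notin> {0..<k} \<longrightarrow> \<phi> i = i)}"
  have rows: "mat k k (\<lambda>(i, j). (A * B) $$ (f i, g j)) = mat\<^sub>r k k (\<lambda>i. finsum_vec TYPE('a) k (?a i) {0..<n})"
  proof (rule eq_matI)
    fix i j assume "i < dim_row (mat\<^sub>r k k (\<lambda>i. finsum_vec TYPE('a) k (?a i) {0..<n}))"
      "j < dim_col (mat\<^sub>r k k (\<lambda>i. finsum_vec TYPE('a) k (?a i) {0..<n}))"
    then have ij: "i < k" "j < k" by auto
    then have "(A * B) $$ (f i, g j) = (\<Sum>l = 0..<n. A $$ (f i, l) * B $$ (l, g j))"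
      using A B f g by (simp add: scalar_prod_def)
    also have "\<dots> = finsum_vec TYPE('a) k (?a i) {0..<n} $ j"
      by (subst index_finsum_vec) (use ij in auto)
    finally show "mat k k (\<lambda>(i, j). (A * B) $$ (f i, g j)) $$ (i, j)
      = mat\<^sub>r k k (\<lambda>i. finsum_vec TYPE('a) k (?a i) {0..<n}) $$ (i, j)"
      using ij by simp
  qed auto
  have "minor (A * B) k f g = (\<Sum>\<phi>\<in>?F. det (mat\<^sub>r k k (\<lambda>i. ?a i (\<phi> i))))"
    unfolding minor_def rows by (rule det_linear_rows_sum) auto
  also have "\<dots> = (\<Sum>\<phi>\<in>?F. (\<Prod>i = 0..<k. A $$ (f i, \<phi> i)) * minor B k \<phi> g)"
  proof (rule sum.cong[OF refl])
    fix \<phi>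
    have "mat\<^sub>r k k (\<lambda>i. vec k (\<lambda>j. B $$ (\<phi> i, g j))) = mat k k (\<lambda>(i, j). B $$ (\<phi> i, g j))"
      by (rule eq_matI) auto
    then show "det (mat\<^sub>r k k (\<lambda>i. ?a i (\<phi> i))) = (\<Prod>i = 0..<k. A $$ (f i, \<phi> i)) * minor B k \<phi> g"
      unfolding minor_def by (subst det_rows_mul) auto
  qed
  also have "x dvd \<dots>"
  proof (intro dvd_sum dvd_mult)
    fix \<phi> assume "\<phi> \<in> ?F"
    then have "\<forall>i<k. \<phi> i < dim_row B" using B by auto
    moreover have "\<forall>j<k. g j < dim_col B" using g B by auto
    ultimately show "x dvd minor B k \<phi> g" using dB unfolding dvd_minors_def by blast
  qed
  finally show "x dvd minor (A * B) k f g" .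
qed

lemma minor_transpose:
  assumes "\<forall>i<k. f i < dim_col M" and "\<forall>j<k. g j < dim_row M"
  shows "minor (transpose_mat M) k f g = minor M k g f"
proof -
  have "minor (transpose_mat M) k f g = det (transpose_mat (mat k k (\<lambda>(i, j). M $$ (g i, f j))))"
    unfolding minor_def by (intro arg_cong[of _ _ det] eq_matI) (use assms in auto)
  also have "\<dots> = minor M k g f" unfolding minor_def by (rule det_transpose) auto
  finally show ?thesis .
qed

lemma dvd_minors_transpose_iff: "dvd_minors (transpose_mat M) k x \<longleftrightarrow> dvd_minors M k x"
proof -
  have "dvd_minors (transpose_mat M) k x" if "dvd_minors M k x" for M :: "'a mat"
    using that unfolding dvd_minors_def by (auto simp: minor_transpose)
  then show ?thesis by (metis transpose_transpose)
qed

lemma dvd_minors_mult_right: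
  assumes A: "A \<in> carrier_mat nr n" and B: "B \<in> carrier_mat n nc" and dA: "dvd_minors A k x"
  shows "dvd_minors (A * B) k x"
proof -
  have "dvd_minors (transpose_mat B * transpose_mat A) k x"
    using A B dA by (intro dvd_minors_mult_left[of _ nc n _ nr]) (auto simp: dvd_minors_transpose_iff)
  then show ?thesis by (simp add: transpose_mult[OF A B, symmetric] dvd_minors_transpose_iff)
qed

lemma invertible_mat_inverse:
  assumes "invertible_mat P" and P: "P \<in> carrier_mat n n"
  obtains B where "B \<in> carrier_mat n n" "B * P = 1\<^sub>m n" "P * B = 1\<^sub>m n"
proof -
  obtain B where "inverts_mat P B" "inverts_mat B P"
    using assms(1) unfolding invertible_mat_def by blast
  then have PB: "P * B = 1\<^sub>m n" and BP: "B * P = 1\<^sub>m (dim_row B)"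
    using P unfolding inverts_mat_def by auto
  have "dim_col B = n" using arg_cong[OF PB, of dim_col] by simp
  moreover have "dim_row B = n" using arg_cong[OF BP, of dim_col] P by simp
  ultimately show ?thesis using that PB BP by auto
qed

lemma dvd_minors_invertible_mult_iff:
  assumes M: "M \<in> carrier_mat nr nc" and P: "P \<in> carrier_mat nr nr" "invertible_mat P"
    and Q: "Q \<in> carrier_mat nc nc" "invertible_mat Q"
  shows "dvd_minors (P * M * Q) k x \<longleftrightarrow> dvd_minors M k x"
proof -
  have both: "dvd_minors (A * N * B) k x"
    if "N \<in> carrier_mat nr nc" "A \<in> carrier_mat nr nr" "B \<in> carrier_mat nc nc" "dvd_minors N k x"
    for A N B
    using that by (meson dvd_minors_mult_left dvd_minors_mult_right mult_carrier_mat)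
  obtain P' where P': "P' \<in> carrier_mat nr nr" "P' * P = 1\<^sub>m nr" by (rule invertible_mat_inverse[OF P(2,1)])
  obtain Q' where Q': "Q' \<in> carrier_mat nc nc" "Q * Q' = 1\<^sub>m nc" by (rule invertible_mat_inverse[OF Q(2,1)])
  have "P' * (P * M * Q) * Q' = P' * (P * M) * (Q * Q')"
    using M P(1) Q(1) P'(1) Q'(1) by (simp add: assoc_mult_mat[of _ nr nr _ nc _ nc])
  also have "\<dots> = M"
    using M P(1) by (simp add: assoc_mult_mat[OF P'(1) P(1) M, symmetric] P'(2) Q'(2))
  finally have "P' * (P * M * Q) * Q' = M" .
  then show ?thesis using both[of M P Q] both[of "P * M * Q" P' Q'] M P Q P' Q' by auto
qed

lemma dvd_chain_mono:
  fixes d :: "nat \<Rightarrow> 'a::comm_monoid_mult"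
  assumes chain: "\<forall>i. i + 1 < q \<longrightarrow> d i dvd d (i + 1)" and "i \<le> j" "j < q"
  shows "d i dvd d j"
  using assms(2,3)
proof (induction j rule: dec_induct)
  case (step j)
  then have "d i dvd d j" by simp
  also have "d j dvd d (Suc j)" using chain step.prems by simp
  finally show ?case .
qed simp

lemma prod_chain_dvd_prod:
  fixes d :: "nat \<Rightarrow> 'a::comm_monoid_mult"
  assumes chain: "\<forall>i. i + 1 < q \<longrightarrow> d i dvd d (i + 1)"
  shows "F \<subseteq> {..<q} \<Longrightarrow> (\<Prod>i<card F. d i) dvd (\<Prod>v\<in>F. d v)"
proof (induction "card F" arbitrary: F)
  case (Suc m F)
  have fin: "finite F" using Suc.prems finite_subset by blast
  then have ne: "F \<noteq> {}" using Suc.hyps(2) by auto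
  define M where "M = Max F"
  have M: "M \<in> F" "M < q" using Max_in[OF fin ne] Suc.prems unfolding M_def by auto
  have "card F \<le> card {..M}" using fin by (intro card_mono) (auto simp: M_def)
  then have "m \<le> M" using Suc.hyps(2) by simp
  have "(\<Prod>i<card F. d i) = (\<Prod>i<m. d i) * d m" using Suc.hyps(2)[symmetric] by simp
  also have "\<dots> dvd (\<Prod>v\<in>F - {M}. d v) * d M"
  proof (rule mult_dvd_mono)
    have "card (F - {M}) = m" using Suc.hyps(2) fin M(1) by simp
    moreover have "F - {M} \<subseteq> {..<q}" using Suc.prems by blast
    ultimately show "(\<Prod>i<m. d i) dvd (\<Prod>v\<in>F - {M}. d v)" using Suc.hyps(1)[of "F - {M}"] by simp
    show "d m dvd d M" using dvd_chain_mono[OF chain \<open>m \<le> M\<close> M(2)] .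
  qed
  also have "\<dots> = (\<Prod>v\<in>F. d v)" using prod.remove[OF fin M(1), of d] by (simp add: mult.commute)
  finally show ?case .
qed simp

definition rect_diag :: "nat \<Rightarrow> nat \<Rightarrow> (nat \<Rightarrow> 'a::zero) \<Rightarrow> 'a mat" where
  "rect_diag p q d = mat p q (\<lambda>(i, j). if i = j then d i else 0)"

lemma minor_rect_diag_leading:
  assumes "k \<le> p" "k \<le> q"
  shows "minor (rect_diag p q d) k id id = (\<Prod>i<k. d i)"
proof -
  have "minor (rect_diag p q d) k id id = det (mat k k (\<lambda>(i, j). if i = j then d i else 0))"
    unfolding minor_def rect_diag_def by (intro arg_cong[of _ _ det] eq_matI) (use assms in auto)
  also have "\<dots> = prod_list (map d [0..<k])"
    by (subst det_upper_triangular) (auto simp: upper_triangular_def diag_mat_def intro!: arg_cong[of _ _ prod_list])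
  finally show ?thesis by (simp add: prod.distinct_set_conv_list[symmetric] atLeast0LessThan)
qed

text \<open>A nonzero term of the Leibniz expansion picks \<open>k\<close> distinct diagonal entries \<open>d v\<close>, whose
  product is divisible by that of the first \<open>k\<close> because the \<open>d i\<close> form a divisibility chain.\<close>
lemma prod_dvd_minor_rect_diag:
  fixes d :: "nat \<Rightarrow> 'a::comm_ring_1"
  assumes chain: "\<forall>i. i + 1 < q \<longrightarrow> d i dvd d (i + 1)"
    and f: "\<forall>i<k. f i < p" and g: "\<forall>j<k. g j < q"
  shows "(\<Prod>i<k. d i) dvd minor (rect_diag p q d) k f g"
proof -
  let ?A = "mat k k (\<lambda>(i, j). rect_diag p q d $$ (f i, g j))"
  have A: "\<And>i j. i < k \<Longrightarrow> j < k \<Longrightarrow> ?A $$ (i, j) = (if f i = g j then d (f i) else 0)"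
    using f g unfolding rect_diag_def by auto
  show ?thesis
  proof (cases "inj_on f {..<k}")
    case False
    then obtain i1 i2 where i: "i1 < k" "i2 < k" "i1 \<noteq> i2" "f i1 = f i2"
      unfolding inj_on_def by auto
    have "row ?A i1 = row ?A i2" using i A by (intro eq_vecI) auto
    then have "det ?A = 0" using i by (intro det_identical_rows[of _ k i1 i2]) auto
    then show ?thesis unfolding minor_def by simp
  next
    case True
    have leibniz_term: "(\<Prod>i<k. d i) dvd (\<Prod>i = 0..<k. ?A $$ (i, \<pi> i))" if \<pi>: "\<pi> permutes {0..<k}" for \<pi>
    proof (cases "\<forall>i<k. f i = g (\<pi> i)")
      case True
      have \<pi>k: "\<And>i. i < k \<Longrightarrow> \<pi> i < k" using \<pi> permutes_in_image by fastforce
      have "(\<Prod>i = 0..<k. ?A $$ (i, \<pi> i)) = (\<Prod>v\<in>f ` {..<k}. d v)"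
        using True A \<pi>k prod.reindex[OF \<open>inj_on f {..<k}\<close>, of d]
        by (simp add: atLeast0LessThan)
      moreover have "f ` {..<k} \<subseteq> {..<q}" using True g \<pi>k by auto
      ultimately show ?thesis
        using prod_chain_dvd_prod[OF chain, of "f ` {..<k}"] card_image[OF \<open>inj_on f {..<k}\<close>] by simp
    next
      case False
      then obtain i where "i < k" "f i \<noteq> g (\<pi> i)" by auto
      moreover have "\<pi> i < k" using \<pi> \<open>i < k\<close> permutes_in_image by fastforce
      ultimately have "?A $$ (i, \<pi> i) = 0" using A by simp
      then have "(\<Prod>i = 0..<k. ?A $$ (i, \<pi> i)) = 0" using \<open>i < k\<close> by (intro prod_zero) auto
      then show ?thesis by simp
    qed
    have "minor (rect_diag p q d) k f g = (\<Sum>\<pi> | \<pi> permutes {0..<k}. signof \<pi> * (\<Prod>i = 0..<k. ?A $$ (i, \<pi> i)))"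
      unfolding minor_def by (rule det_def') auto
    also have "(\<Prod>i<k. d i) dvd \<dots>" using leibniz_term by (intro dvd_sum dvd_mult) auto
    finally show ?thesis .
  qed
qed

text \<open>The \<open>k\<close>-th determinantal divisor is \<open>d 0 \<dots> d (k - 1)\<close>, as for the diagonal matrix itself.\<close>
lemma dvd_minors_snf_iff:
  fixes M :: "'a::comm_ring_1 mat"
  assumes snf: "is_snf_entries M d" and k: "k \<le> dim_row M" "k \<le> dim_col M"
  shows "dvd_minors M k x \<longleftrightarrow> x dvd (\<Prod>i<k. d i)"
proof -
  obtain P Q where P: "P \<in> carrier_mat (dim_row M) (dim_row M)" "invertible_mat P"
    and Q: "Q \<in> carrier_mat (dim_col M) (dim_col M)" "invertible_mat Q"
    and PMQ: "P * M * Q = rect_diag (dim_row M) (dim_col M) d"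
    and chain: "\<forall>i. i + 1 < dim_col M \<longrightarrow> d i dvd d (i + 1)"
    using snf unfolding is_snf_entries_def rect_diag_def by blast
  have "dvd_minors M k x \<longleftrightarrow> dvd_minors (rect_diag (dim_row M) (dim_col M) d) k x"
    using dvd_minors_invertible_mult_iff[OF _ P Q, of M] PMQ by simp
  also have "\<dots> \<longleftrightarrow> x dvd (\<Prod>i<k. d i)"
  proof
    assume "dvd_minors (rect_diag (dim_row M) (dim_col M) d) k x"
    then have "x dvd minor (rect_diag (dim_row M) (dim_col M) d) k id id"
      unfolding dvd_minors_def by (rule allE[of _ id], elim allE[of _ id]) (use k in \<open>simp add: rect_diag_def\<close>)
    then show "x dvd (\<Prod>i<k. d i)" by (simp only: minor_rect_diag_leading[OF k])
  next
    assume "x dvd (\<Prod>i<k. d i)"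
    then show "dvd_minors (rect_diag (dim_row M) (dim_col M) d) k x"
      using prod_dvd_minor_rect_diag[OF chain] unfolding dvd_minors_def rect_diag_def
      by (auto intro: dvd_trans)
  qed
  finally show ?thesis .
qed

lemma snf_prefix_prod_dvd_iff:
  assumes snf: "is_snf_entries (sub_toeplitz n h c) d" and j: "1 \<le> j" "j \<le> c" and cn: "2 * c \<le> n"
  shows "x dvd (\<Prod>i<j. d i) \<longleftrightarrow> dvd_minors (sub_toeplitz n h j) j x"
proof -
  have "x dvd (\<Prod>i<j. d i) \<longleftrightarrow> dvd_minors (sub_toeplitz n h c) j x"
    using dvd_minors_snf_iff[OF snf] j cn by simp
  also have "\<dots> \<longleftrightarrow> dvd_minors (sub_toeplitz n h j) j x"
    by (rule dvd_minors_sub_toeplitz_indep[OF j cn])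
  finally show ?thesis .
qed

text \<open>Cancel the common factor \<open>d 0 \<dots> d (k - 1)\<close>, which vanishes only when \<open>d k\<close> does.\<close>
lemma chain_entries_associated:
  fixes d d' :: "nat \<Rightarrow> 'a::idom"
  assumes chain: "\<forall>i. i + 1 < q \<longrightarrow> d i dvd d (i + 1)" "\<forall>i. i + 1 < q' \<longrightarrow> d' i dvd d' (i + 1)"
    and k: "k < q" "k < q'"
    and prods: "\<And>j x. j \<le> Suc k \<Longrightarrow> x dvd (\<Prod>i<j. d i) \<longleftrightarrow> x dvd (\<Prod>i<j. d' i)"
  shows "d k dvd d' k \<and> d' k dvd d k"
proof -
  define a a' where "a = (\<Prod>i<k. d i)" and "a' = (\<Prod>i<k. d' i)"
  have aa': "a dvd a'" "a' dvd a" using prods[of k a] prods[of k a'] unfolding a_def a'_def by simp_all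
  have prod_Suc: "a * d k dvd a' * d' k" "a' * d' k dvd a * d k"
    using prods[of "Suc k" "a * d k"] prods[of "Suc k" "a' * d' k"] unfolding a_def a'_def by simp_all
  show ?thesis
  proof (cases "a = 0")
    case True
    then have "a' = 0" using aa'(1) by simp
    obtain i i' where "i < k" "d i = 0" "i' < k" "d' i' = 0"
      using True \<open>a' = 0\<close> unfolding a_def a'_def by auto
    then show ?thesis using dvd_chain_mono[OF chain(1), of i k] dvd_chain_mono[OF chain(2), of i' k] k by simp
  next
    case False
    then have "a' \<noteq> 0" using aa'(2) by auto
    have "a' * d k dvd a' * d' k" using mult_dvd_mono[OF aa'(2) dvd_refl] prod_Suc(1) by (rule dvd_trans)
    moreover have "a * d' k dvd a * d k" using mult_dvd_mono[OF aa'(1) dvd_refl] prod_Suc(2) by (rule dvd_trans)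
    ultimately show ?thesis using False \<open>a' \<noteq> 0\<close> by simp
  qed
qed

theorem lemma2:
  fixes n k :: nat and h :: "nat \<Rightarrow> 'a::pid"
  assumes "n \<ge> 1" and "1 \<le> k" and "2 * k \<le> n"
  shows "\<forall>c c' d d'. k \<le> c \<and> 2 * c \<le> n \<and> k \<le> c' \<and> 2 * c' \<le> n \<and>
           is_snf_entries (sub_toeplitz n h c) d \<and> is_snf_entries (sub_toeplitz n h c') d' \<longrightarrow>
           d (k - 1) dvd d' (k - 1) \<and> d' (k - 1) dvd d (k - 1)"
proof (intro allI impI, elim conjE)
  fix c c' d d'
  assume c: "k \<le> c" "2 * c \<le> n" and c': "k \<le> c'" "2 * c' \<le> n"
    and snf: "is_snf_entries (sub_toeplitz n h c) d" and snf': "is_snf_entries (sub_toeplitz n h c') d'"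
  have "x dvd (\<Prod>i<j. d i) \<longleftrightarrow> x dvd (\<Prod>i<j. d' i)" if "j \<le> Suc (k - 1)" for j x
  proof (cases "j = 0")
    case False
    then show ?thesis
      using that assms(2) c c' by (simp add: snf_prefix_prod_dvd_iff[OF snf] snf_prefix_prod_dvd_iff[OF snf'])
  qed simp
  moreover have "\<forall>i. i + 1 < c \<longrightarrow> d i dvd d (i + 1)" "\<forall>i. i + 1 < c' \<longrightarrow> d' i dvd d' (i + 1)"
    using snf snf' unfolding is_snf_entries_def by auto
  ultimately show "d (k - 1) dvd d' (k - 1) \<and> d' (k - 1) dvd d (k - 1)"
    using assms(2) c c' by (intro chain_entries_associated) auto
qed

end
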